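(* Let $G$ be a scheduling game on $m$ identical machines of speed $1$ in which every job $i$ has processing-time function $p_i(t)=b_i+at$ with $b_i\ge0$ and a common rate $a>0$, and in which all machines use the SBPT (Shortest Basic Processing Time) global priority list, i.e. jobs are ordered in non-decreasing order of $b_i$ (ties broken arbitrarily). Then every pure Nash equilibrium $\sigma$ of $G$ minimizes the total processing time: $\sum_{i\in N}p_i(S_i(\sigma))\le\sum_{i\in N}p_i(S_i(\sigma'))$ for every profile $\sigma'$ of $G$.
   Context: Scheduling game: a finite set $N$ of $n$ jobs (players) and a set $M$ of $m$ machines; machine $j$ has speed $s_j>0$. With a global priority list, all machines share the same bijection $\pi:N\to\{1,\dots,n\}$, and job $u$ has higher priority than $v$ iff $\pi(u)<\pi(v)$. A profile $\sigma\in M^N$ assigns each job to a machine. On machine $j$, the jobs assigned to it, listed in increasing $\pi$-order as $i_1,i_2,\dots$, are processed without idle time: $S_{i_1}(\sigma)=0$, $C_{i_k}(\sigma)=S_{i_k}(\sigma)+p_{i_k}(S_{i_k}(\sigma))/s_j$, $S_{i_{k+1}}(\sigma)=C_{i_k}(\sigma)$. The cost of job $i$ is $C_i(\sigma)$. A pure Nash equilibrium (NE) is a profile in which no job can strictly decrease its completion time by unilaterally changing its machine. *)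

theory Defs
  imports Complex_Main
begin

fun sched :: "('j \<Rightarrow> real \<Rightarrow> real) \<Rightarrow> real \<Rightarrow> real \<Rightarrow> 'j list \<Rightarrow> ('j \<times> real) list" where
  "sched p sp t [] = []"
| "sched p sp t (i # is) = (i, t) # sched p sp (t + p i t / sp) is"

definition machine_jobs :: "'j set \<Rightarrow> ('j \<Rightarrow> nat) \<Rightarrow> ('j \<Rightarrow> 'm) \<Rightarrow> 'm \<Rightarrow> 'j list" where
  "machine_jobs N prio sigma j =
     map (inv_into N prio) (sorted_list_of_set (prio ` {k \<in> N. sigma k = j}))"

definition start_time ::
  "'j set \<Rightarrow> ('j \<Rightarrow> nat) \<Rightarrow> ('j \<Rightarrow> real \<Rightarrow> real) \<Rightarrow> ('m \<Rightarrow> real) \<Rightarrow> ('j \<Rightarrow> 'm) \<Rightarrow> 'j \<Rightarrow> real" where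
  "start_time N prio p s sigma i =
     the (map_of (sched p (s (sigma i)) 0 (machine_jobs N prio sigma (sigma i))) i)"

definition completion_time ::
  "'j set \<Rightarrow> ('j \<Rightarrow> nat) \<Rightarrow> ('j \<Rightarrow> real \<Rightarrow> real) \<Rightarrow> ('m \<Rightarrow> real) \<Rightarrow> ('j \<Rightarrow> 'm) \<Rightarrow> 'j \<Rightarrow> real" where
  "completion_time N prio p s sigma i =
     start_time N prio p s sigma i + p i (start_time N prio p s sigma i) / s (sigma i)"

definition profile :: "'j set \<Rightarrow> 'm set \<Rightarrow> ('j \<Rightarrow> 'm) \<Rightarrow> bool" where
  "profile N M sigma \<longleftrightarrow> (\<forall>i\<in>N. sigma i \<in> M)"

definition pure_NE ::
  "'j set \<Rightarrow> 'm set \<Rightarrow> ('j \<Rightarrow> nat) \<Rightarrow> ('j \<Rightarrow> real \<Rightarrow> real) \<Rightarrow> ('m \<Rightarrow> real) \<Rightarrow> ('j \<Rightarrow> 'm) \<Rightarrow> bool" where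
  "pure_NE N M prio p s sigma \<longleftrightarrow> profile N M sigma \<and>
     (\<forall>i\<in>N. \<forall>j\<in>M. \<not> completion_time N prio p s (sigma(i := j)) i < completion_time N prio p s sigma i)"

definition total_processing_time ::
  "'j set \<Rightarrow> ('j \<Rightarrow> nat) \<Rightarrow> ('j \<Rightarrow> real \<Rightarrow> real) \<Rightarrow> ('m \<Rightarrow> real) \<Rightarrow> ('j \<Rightarrow> 'm) \<Rightarrow> real" where
  "total_processing_time N prio p s sigma = (\<Sum>i\<in>N. p i (start_time N prio p s sigma i))"

end

theory Submission
  imports Defs "HOL-Library.Multiset"
begin

text \<open>For p_i(t) = b_i + a t on unit-speed machines, a job started at time t completes at
q t + b_i with q = 1 + a. Hence the makespan of a machine is the Horner sum of b_k q^r_k over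
its jobs, r_k being the number of jobs processed after k, and the total processing time, the sum
of C_i - S_i, is the sum of the makespans.

In an equilibrium every job starts on a machine whose load of higher-priority jobs is least, so
the equilibrium is what greedy list scheduling in SBPT order produces. Step by step, the multiset
of machine loads of a greedy profile is therefore determined, and so is its total processing time;
the round-robin assignment is greedy, so it suffices to show that round robin is optimal.

Expanding q^r = 1 + a (1 + q + ... + q^(r-1)), the total processing time of any profile is
the sum of the b_k plus a times the sum over u of q^u W_u, where W_u is the total basic time of
the jobs with more than u successors on their machine. At most m (u + 1) jobs have at most u
successors, and round robin gives more than u successors exactly to the n - m (u + 1) jobs of
least b, so it minimises every W_u simultaneously.\<close>

fun sched_end :: "('j \<Rightarrow> real \<Rightarrow> real) \<Rightarrow> real \<Rightarrow> real \<Rightarrow> 'j list \<Rightarrow> real" where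
  "sched_end p sp t [] = t"
| "sched_end p sp t (i # is) = sched_end p sp (t + p i t / sp) is"

lemma sched_end_snoc:
  "sched_end p sp t (xs @ [i]) = sched_end p sp t xs + p i (sched_end p sp t xs) / sp"
  by (induction xs arbitrary: t) auto

lemma map_of_sched_middle:
  "i \<notin> set xs \<Longrightarrow> map_of (sched p sp t (xs @ i # ys)) i = Some (sched_end p sp t xs)"
  by (induction xs arbitrary: t) auto

lemma image_mset_change_one:
  assumes "finite A" "x \<in> A" "\<forall>y\<in>A - {x}. f y = g y"
  shows "image_mset f (mset_set A) = image_mset g (mset_set A) - {#g x#} + {#f x#}"
proof -
  have "image_mset f (mset_set (A - {x})) = image_mset g (mset_set (A - {x}))"
    using assms by (intro image_mset_cong) auto
  then show ?thesis
    using mset_set.remove[OF assms(1,2)] by simp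
qed

lemma sum_le_sum_dominated:
  fixes f :: "'a \<Rightarrow> 'b::ordered_comm_monoid_add"
  assumes "finite F" "finite R" "card F \<le> card R"
    and "\<forall>x\<in>R - F. \<forall>y\<in>F - R. f y \<le> f x" and "\<forall>x\<in>R - F. f x \<ge> 0"
  shows "sum f F \<le> sum f R"
proof -
  have "card (F - R) = card F - card (F \<inter> R)" "card (R - F) = card R - card (F \<inter> R)"
    using assms(1,2) by (simp_all add: card_Diff_subset_Int Int_commute)
  then have "card (F - R) \<le> card (R - F)"
    using assms(3) by linarith
  then obtain g where g: "g ` (F - R) \<subseteq> R - F" "inj_on g (F - R)"
    using card_le_inj[of "F - R" "R - F"] assms(1,2) by auto
  have "sum f (F - R) \<le> sum (f \<circ> g) (F - R)"
    using g(1) assms(4) by (intro sum_mono) auto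
  also have "\<dots> = sum f (g ` (F - R))"
    using g(2) by (simp add: sum.reindex)
  also have "\<dots> \<le> sum f (R - F)"
    using g(1) assms(2,5) by (intro sum_mono2) auto
  finally have "sum f (F \<inter> R) + sum f (F - R) \<le> sum f (F \<inter> R) + sum f (R - F)"
    by (rule add_left_mono)
  then show ?thesis
    by (metis Int_commute sum.Int_Diff assms(1,2))
qed

lemma card_same_residue_between:
  fixes x P m :: nat
  shows "card {y. x < y \<and> y < P \<and> y mod m = x mod m} = (P - 1 - x) div m"
proof (cases "m = 0")
  case False
  have "{y. x < y \<and> y < P \<and> y mod m = x mod m} = (\<lambda>t. x + m * t) ` {1..(P - 1 - x) div m}"
  proof (intro set_eqI iffI)
    fix y assume y: "y \<in> {y. x < y \<and> y < P \<and> y mod m = x mod m}"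
    then obtain t where t: "y - x = m * t"
      using mod_eq_dvd_iff_nat[of x y m] by (auto simp: dvd_def)
    have "m * t \<le> P - 1 - x"
      using t y by simp linarith
    then have "t \<le> (P - 1 - x) div m"
      using False by (simp add: less_eq_div_iff_mult_less_eq mult.commute)
    moreover have "1 \<le> t"
      using t y by (cases t) auto
    ultimately show "y \<in> (\<lambda>t. x + m * t) ` {1..(P - 1 - x) div m}"
      using t y by force
  next
    fix y assume "y \<in> (\<lambda>t. x + m * t) ` {1..(P - 1 - x) div m}"
    then obtain t where t: "y = x + m * t" "1 \<le> t" "m * t \<le> P - 1 - x"
      using False by (auto simp: less_eq_div_iff_mult_less_eq mult.commute)
    moreover have "0 < m * t"
      using t False by simp
    ultimately have "x < y" "y < P"
      by linarith+
    then show "y \<in> {y. x < y \<and> y < P \<and> y mod m = x mod m}"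
      using t by simp
  qed
  moreover have "inj_on (\<lambda>t. x + m * t) {1..(P - 1 - x) div m}"
    using False by (auto simp: inj_on_def)
  ultimately show ?thesis by (simp add: card_image)
next
  case True
  then show ?thesis by simp
qed

lemma mod_add_offset_eq:
  fixes x y r m :: nat
  assumes "x mod m = y mod m" "r < m"
  shows "(x + (r + m - y mod m) mod m) mod m = r"
proof -
  have "(x + (r + m - y mod m) mod m) mod m = (x mod m + (r + m - y mod m)) mod m"
    by (simp add: mod_add_left_eq mod_add_right_eq)
  also have "y mod m \<le> r + m"
    using assms(2) by (simp add: trans_le_add2)
  then have "x mod m + (r + m - y mod m) = r + m"
    unfolding assms(1) by (rule le_add_diff_inverse)
  finally show ?thesis
    using assms(2) by simp
qed

lemma mult_minus_Suc_div_eq: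
  fixes m i d :: nat
  assumes "d < m" "0 < i"
  shows "(m * i - Suc d) div m = i - 1"
proof -
  obtain j where "i = Suc j"
    using assms(2) gr0_implies_Suc by blast
  then have "(m * i - Suc d) div m = ((m - Suc d) + m * j) div m"
    using assms(1) by (simp add: algebra_simps)
  also have "\<dots> = j + (m - Suc d) div m"
    using assms(1) by (intro div_mult_self2) simp
  also have "(m - Suc d) div m = 0"
    using assms(1) by simp
  finally show ?thesis
    using \<open>i = Suc j\<close> by simp
qed

locale prioritized_jobs =
  fixes N :: "'j set" and prio :: "'j \<Rightarrow> nat"
  assumes finite_N: "finite N" and bij_prio: "bij_betw prio N {1..card N}"
begin

abbreviation n :: nat where "n \<equiv> card N"

lemma inj_prio: "inj_on prio N"
  using bij_prio by (simp add: bij_betw_def)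

lemma prio_bounds: "k \<in> N \<Longrightarrow> 1 \<le> prio k \<and> prio k \<le> n"
  using bij_prio by (auto simp: bij_betw_def)

lemma prio_eq_iff: "k \<in> N \<Longrightarrow> l \<in> N \<Longrightarrow> prio k = prio l \<longleftrightarrow> k = l"
  using inj_prio by (auto dest: inj_onD)

lemma inv_prio: "x \<in> {1..n} \<Longrightarrow> inv_into N prio x \<in> N \<and> prio (inv_into N prio x) = x"
  using bij_prio by (auto simp: bij_betw_def intro: inv_into_into f_inv_into_f)

lemma card_filter_prio: "card {k\<in>N. Q (prio k)} = card {x\<in>{1..n}. Q x}"
proof -
  have "prio ` {k\<in>N. Q (prio k)} = {x\<in>{1..n}. Q x}"
    using bij_prio by (auto simp: bij_betw_def)
  moreover have "inj_on prio {k\<in>N. Q (prio k)}"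
    using inj_prio by (rule inj_on_subset) auto
  ultimately show ?thesis
    by (metis card_image)
qed

lemma subset_prio_induct[consumes 1, case_names empty insert]:
  assumes "S \<subseteq> N" and "P {}"
    and "\<And>x S. S \<subseteq> N \<Longrightarrow> x \<in> N \<Longrightarrow> x \<notin> S \<Longrightarrow> \<forall>k\<in>S. prio k < prio x \<Longrightarrow> P S \<Longrightarrow> P (insert x S)"
  shows "P S"
proof -
  have "finite S"
    using assms(1) finite_N finite_subset by blast
  then show ?thesis
    using assms(1)
  proof (induction S rule: finite_ranking_induct[where f = prio])
    case empty
    show ?case by (rule assms(2))
  next
    case (insert x S)
    show ?case
    proof (cases "x \<in> S")
      case True
      then show ?thesis using insert by (simp add: insert_absorb)
    next
      case False
      have "prio k < prio x" if "k \<in> S" for k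
        using that False insert inj_onD[OF inj_prio, of k x] by force
      then show ?thesis
        using insert False by (intro assms(3)) auto
    qed
  qed
qed

definition by_prio :: "'j set \<Rightarrow> 'j list" where
  "by_prio S = map (inv_into N prio) (sorted_list_of_set (prio ` S))"

lemma machine_jobs_eq_by_prio: "machine_jobs N prio \<tau> j = by_prio {k\<in>N. \<tau> k = j}"
  by (simp add: machine_jobs_def by_prio_def)

lemma by_prio_unique:
  assumes "set xs \<subseteq> N" "sorted_wrt (\<lambda>k l. prio k < prio l) xs"
  shows "by_prio (set xs) = xs"
proof -
  have "sorted_wrt (<) (map prio xs)"
    using assms(2) by (simp add: sorted_wrt_map)
  then have "length xs = card (prio ` set xs)"
    by (metis distinct_card length_map list.set_map strict_sorted_iff)
  then have "sorted_list_of_set (prio ` set xs) = map prio xs"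
    using \<open>sorted_wrt (<) (map prio xs)\<close>
    by (subst sorted_list_of_set_unique[symmetric]) auto
  then show ?thesis
    using assms(1) inj_prio by (simp add: by_prio_def map_idI subset_iff)
qed

lemma set_by_prio: "S \<subseteq> N \<Longrightarrow> set (by_prio S) = S"
proof -
  assume "S \<subseteq> N"
  then have "finite (prio ` S)"
    using finite_N finite_subset by blast
  then have "set (by_prio S) = inv_into N prio ` prio ` S"
    by (simp add: by_prio_def image_image)
  also have "\<dots> = S"
    using inv_into_image_cancel[OF inj_prio \<open>S \<subseteq> N\<close>] .
  finally show ?thesis .
qed

lemma sorted_by_prio: "S \<subseteq> N \<Longrightarrow> sorted_wrt (\<lambda>k l. prio k < prio l) (by_prio S)"
proof -
  assume "S \<subseteq> N"
  then have "map prio (by_prio S) = sorted_list_of_set (prio ` S)"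
    using finite_N finite_subset by (fastforce simp: by_prio_def f_inv_into_f intro: map_idI)
  then show ?thesis
    by (metis sorted_list_of_set.strict_sorted_key_list_of_set sorted_wrt_map)
qed

lemma by_prio_snoc:
  assumes "S \<subseteq> N" "x \<in> N" "\<forall>k\<in>S. prio k < prio x"
  shows "by_prio (insert x S) = by_prio S @ [x]"
  using by_prio_unique[of "by_prio S @ [x]"] assms set_by_prio[of S] sorted_by_prio[of S]
  by (simp add: sorted_wrt_append)

lemma by_prio_split:
  assumes "S \<subseteq> N" "x \<in> S"
  shows "by_prio S = by_prio {k\<in>S. prio k < prio x} @ x # by_prio {k\<in>S. prio x < prio k}"
proof -
  let ?below = "{k\<in>S. prio k < prio x}" and ?above = "{k\<in>S. prio x < prio k}"
  have sets: "set (by_prio ?below) = ?below" "set (by_prio ?above) = ?above"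
    using assms(1) by (simp_all add: set_by_prio subset_iff)
  have "prio k \<noteq> prio x" if "k \<in> S" "k \<noteq> x" for k
    using that assms inj_onD[OF inj_prio, of k x] by auto
  then have "set (by_prio ?below @ x # by_prio ?above) = S"
    using assms(2) by (auto simp: sets linorder_neq_iff)
  moreover have "sorted_wrt (\<lambda>k l. prio k < prio l) (by_prio ?below @ x # by_prio ?above)"
    using assms(1) sorted_by_prio[of ?below] sorted_by_prio[of ?above]
    by (auto simp: sorted_wrt_append sets)
  ultimately show ?thesis
    using by_prio_unique[of "by_prio ?below @ x # by_prio ?above"] assms(1) by simp
qed

definition rank :: "'j set \<Rightarrow> 'j \<Rightarrow> nat" where
  "rank S k = card {l\<in>S. prio k < prio l}"

definition num_after :: "('j \<Rightarrow> 'm) \<Rightarrow> 'j \<Rightarrow> nat" where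
  "num_after \<tau> k = rank {l\<in>N. \<tau> l = \<tau> k} k"

lemma num_after_less_n: "k \<in> N \<Longrightarrow> num_after \<tau> k < n"
proof -
  assume "k \<in> N"
  then have "{l\<in>{l\<in>N. \<tau> l = \<tau> k}. prio k < prio l} \<subset> N"
    by auto
  then show ?thesis
    unfolding num_after_def rank_def using finite_N by (rule psubset_card_mono[rotated])
qed

lemma num_after_strict_mono:
  assumes "k \<in> N" "l \<in> N" "\<tau> k = \<tau> l" "prio k < prio l"
  shows "num_after \<tau> l < num_after \<tau> k"
proof -
  have "{l'\<in>{l'\<in>N. \<tau> l' = \<tau> l}. prio l < prio l'} \<subset> {l'\<in>{l'\<in>N. \<tau> l' = \<tau> k}. prio k < prio l'}"
    using assms by auto
  then show ?thesis
    unfolding num_after_def rank_def using finite_N by (intro psubset_card_mono) auto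
qed

lemma card_num_after_le:
  assumes "\<forall>i\<in>N. \<tau> i \<in> M" "finite M"
  shows "card {k\<in>N. num_after \<tau> k \<le> u} \<le> card M * Suc u"
proof -
  have "inj_on (\<lambda>k. (\<tau> k, num_after \<tau> k)) N"
  proof (rule inj_onI, rule ccontr)
    fix k l assume "k \<in> N" "l \<in> N" "(\<tau> k, num_after \<tau> k) = (\<tau> l, num_after \<tau> l)" "k \<noteq> l"
    then show False
      using num_after_strict_mono[of k l \<tau>] num_after_strict_mono[of l k \<tau>] prio_eq_iff
      by (metis Pair_inject less_irrefl linorder_neqE_nat)
  qed
  then have "card {k\<in>N. num_after \<tau> k \<le> u} \<le> card (M \<times> {..u})"
    using assms by (intro card_inj_on_le[OF inj_on_subset]) auto
  then show ?thesis
    by (simp add: card_cartesian_product)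
qed

end

locale linear_jobs = prioritized_jobs N prio for N :: "'j set" and prio +
  fixes b :: "'j \<Rightarrow> real" and a :: real
  assumes b_nonneg: "\<forall>k\<in>N. 0 \<le> b k" and a_pos: "0 < a"
begin

abbreviation proc :: "'j \<Rightarrow> real \<Rightarrow> real" where
  "proc \<equiv> \<lambda>i t. b i + a * t"

definition q :: real where "q = 1 + a"

lemma q_gt_1: "1 < q"
  using a_pos by (simp add: q_def)

text \<open>Solving the recursion C' = q C + b_k for successive completion times on a unit-speed
machine, started at time 0.\<close>
definition load :: "'j set \<Rightarrow> real" where
  "load S = (\<Sum>k\<in>S. b k * q ^ rank S k)"

lemma load_empty [simp]: "load {} = 0"
  by (simp add: load_def)

lemma load_insert_last:
  assumes "finite S" "z \<notin> S" "\<forall>k\<in>S. prio k < prio z"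
  shows "load (insert z S) = q * load S + b z"
proof -
  have none_after: "{l\<in>insert z S. prio z < prio l} = {}"
    using assms(3) by auto
  then have "rank (insert z S) z = 0"
    unfolding rank_def none_after by simp
  moreover have "rank (insert z S) k = Suc (rank S k)" if "k \<in> S" for k
  proof -
    have "{l\<in>insert z S. prio k < prio l} = insert z {l\<in>S. prio k < prio l}"
      using assms(3) that by auto
    then show ?thesis
      using assms(1,2) by (simp add: rank_def)
  qed
  ultimately show ?thesis
    using assms(1,2) by (simp add: load_def sum_distrib_left algebra_simps cong: sum.cong)
qed

lemma sched_end_by_prio: "S \<subseteq> N \<Longrightarrow> sched_end proc 1 0 (by_prio S) = load S"
proof (induction S rule: subset_prio_induct)
  case empty
  then show ?case by (simp add: by_prio_def)
next
  case (insert x S)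
  have "finite S"
    using insert.hyps(1) finite_N finite_subset by blast
  then show ?case
    using insert load_insert_last[OF \<open>finite S\<close> insert.hyps(3,4)]
    by (simp add: by_prio_snoc sched_end_snoc q_def algebra_simps)
qed

lemma load_eq_sum_proc: "S \<subseteq> N \<Longrightarrow> load S = (\<Sum>i\<in>S. proc i (load {k\<in>S. prio k < prio i}))"
proof (induction S rule: subset_prio_induct)
  case empty
  then show ?case by simp
next
  case (insert x S)
  have "finite S"
    using insert.hyps(1) finite_N finite_subset by blast
  have "{k\<in>insert x S. prio k < prio x} = S"
    using insert.hyps(4) by auto
  moreover have "{k\<in>insert x S. prio k < prio i} = {k\<in>S. prio k < prio i}" if "i \<in> S" for i
    using insert.hyps(4) that by auto
  ultimately have "(\<Sum>i\<in>insert x S. proc i (load {k\<in>insert x S. prio k < prio i}))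
      = proc x (load S) + load S"
    using insert.IH insert.hyps(3) \<open>finite S\<close> by simp
  then show ?case
    using load_insert_last[OF \<open>finite S\<close> insert.hyps(3,4)] by (simp add: q_def algebra_simps)
qed

lemma load_le_load_embedding:
  assumes "S \<subseteq> N" "T \<subseteq> N" "inj_on \<phi> S"
    and "\<forall>k\<in>S. \<phi> k \<in> T \<and> b k \<le> b (\<phi> k) \<and> rank T (\<phi> k) = rank S k"
  shows "load S \<le> load T"
proof -
  have "load S \<le> (\<Sum>k\<in>S. b (\<phi> k) * q ^ rank T (\<phi> k))"
    unfolding load_def using assms(4) q_gt_1 by (intro sum_mono mult_right_mono) auto
  also have "\<dots> = (\<Sum>l\<in>\<phi> ` S. b l * q ^ rank T l)"
    using assms(3) by (simp add: sum.reindex)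
  also have "\<dots> \<le> load T"
    unfolding load_def using assms(2,4) finite_N finite_subset b_nonneg q_gt_1
    by (intro sum_mono2) auto
  finally show ?thesis .
qed

definition jobs_below :: "('j \<Rightarrow> 'm) \<Rightarrow> 'm \<Rightarrow> nat \<Rightarrow> 'j set" where
  "jobs_below \<tau> j p = {k\<in>N. \<tau> k = j \<and> prio k < p}"

lemma jobs_below_subset: "jobs_below \<tau> j p \<subseteq> N"
  by (auto simp: jobs_below_def)

lemma jobs_below_Suc_n: "jobs_below \<tau> j (Suc n) = {k\<in>N. \<tau> k = j}"
  using prio_bounds by (auto simp: jobs_below_def less_Suc_eq_le)

lemma start_time_eq_load:
  assumes "i \<in> N" "s (\<tau> i) = 1"
  shows "start_time N prio proc s \<tau> i = load (jobs_below \<tau> (\<tau> i) (prio i))"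
proof -
  let ?S = "{k\<in>N. \<tau> k = \<tau> i}"
  have below: "{k\<in>?S. prio k < prio i} = jobs_below \<tau> (\<tau> i) (prio i)"
    by (auto simp: jobs_below_def)
  have "machine_jobs N prio \<tau> (\<tau> i)
      = by_prio (jobs_below \<tau> (\<tau> i) (prio i)) @ i # by_prio {k\<in>?S. prio i < prio k}"
    unfolding machine_jobs_eq_by_prio below[symmetric] using assms(1) by (intro by_prio_split) auto
  moreover have "i \<notin> set (by_prio (jobs_below \<tau> (\<tau> i) (prio i)))"
    by (subst set_by_prio) (auto simp: jobs_below_def)
  ultimately show ?thesis
    by (simp add: start_time_def assms(2) map_of_sched_middle sched_end_by_prio jobs_below_subset)
qed

lemma completion_time_eq_load:
  assumes "i \<in> N" "s (\<tau> i) = 1"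
  shows "completion_time N prio proc s \<tau> i = q * load (jobs_below \<tau> (\<tau> i) (prio i)) + b i"
  unfolding completion_time_def start_time_eq_load[where \<tau> = \<tau> and s = s, OF assms] using assms(2)
  by (simp add: q_def algebra_simps)

lemma total_processing_time_eq_sum_load:
  assumes "\<forall>i\<in>N. \<tau> i \<in> M" "finite M" "\<forall>j\<in>M. s j = 1"
  shows "total_processing_time N prio proc s \<tau> = (\<Sum>j\<in>M. load {k\<in>N. \<tau> k = j})"
proof -
  have "total_processing_time N prio proc s \<tau>
      = (\<Sum>i\<in>N. proc i (load {k\<in>{k\<in>N. \<tau> k = \<tau> i}. prio k < prio i}))"
    unfolding total_processing_time_def using assms(1,3)
    by (intro sum.cong) (auto simp: start_time_eq_load jobs_below_def)
  also have "\<dots> = (\<Sum>j\<in>M. \<Sum>i\<in>{k\<in>N. \<tau> k = j}. proc i (load {k\<in>{k\<in>N. \<tau> k = \<tau> i}. prio k < prio i}))"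
    by (rule sum.group[symmetric, OF finite_N assms(2)]) (use assms(1) in auto)
  also have "\<dots> = (\<Sum>j\<in>M. \<Sum>i\<in>{k\<in>N. \<tau> k = j}. proc i (load {k\<in>{k\<in>N. \<tau> k = j}. prio k < prio i}))"
    by (intro sum.cong refl) auto
  also have "\<dots> = (\<Sum>j\<in>M. load {k\<in>N. \<tau> k = j})"
    by (intro sum.cong refl load_eq_sum_proc[symmetric]) auto
  finally show ?thesis .
qed

definition greedy :: "'m set \<Rightarrow> ('j \<Rightarrow> 'm) \<Rightarrow> bool" where
  "greedy M \<tau> \<longleftrightarrow> (\<forall>z\<in>N. \<tau> z \<in> M \<and>
     (\<forall>j\<in>M. load (jobs_below \<tau> (\<tau> z) (prio z)) \<le> load (jobs_below \<tau> j (prio z))))"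

lemma pure_NE_imp_greedy:
  assumes "pure_NE N M prio proc s \<sigma>" "\<forall>j\<in>M. s j = 1"
  shows "greedy M \<sigma>"
  unfolding greedy_def
proof (intro ballI conjI)
  fix z assume "z \<in> N"
  then show "\<sigma> z \<in> M"
    using assms(1) by (simp add: pure_NE_def profile_def)
  fix j assume "j \<in> M"
  have "jobs_below (\<sigma>(z := j)) j (prio z) = jobs_below \<sigma> j (prio z)"
    by (auto simp: jobs_below_def)
  then have "completion_time N prio proc s (\<sigma>(z := j)) z = q * load (jobs_below \<sigma> j (prio z)) + b z"
    using completion_time_eq_load[of z s "\<sigma>(z := j)"] \<open>z \<in> N\<close> \<open>j \<in> M\<close> assms(2) by simp
  moreover have "completion_time N prio proc s \<sigma> z = q * load (jobs_below \<sigma> (\<sigma> z) (prio z)) + b z"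
    using completion_time_eq_load[of z s \<sigma>] \<open>z \<in> N\<close> \<open>\<sigma> z \<in> M\<close> assms(2) by simp
  moreover have "\<not> completion_time N prio proc s (\<sigma>(z := j)) z < completion_time N prio proc s \<sigma> z"
    using assms(1) \<open>z \<in> N\<close> \<open>j \<in> M\<close> by (simp add: pure_NE_def)
  ultimately show "load (jobs_below \<sigma> (\<sigma> z) (prio z)) \<le> load (jobs_below \<sigma> j (prio z))"
    using q_gt_1 by simp
qed

definition loads :: "'m set \<Rightarrow> ('j \<Rightarrow> 'm) \<Rightarrow> nat \<Rightarrow> real multiset" where
  "loads M \<tau> p = image_mset (\<lambda>j. load (jobs_below \<tau> j p)) (mset_set M)"

lemma loads_Suc_not_prio:
  assumes "p \<notin> prio ` N"
  shows "loads M \<tau> (Suc p) = loads M \<tau> p"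
proof -
  have "jobs_below \<tau> j (Suc p) = jobs_below \<tau> j p" for j
    using assms by (auto simp: jobs_below_def less_Suc_eq)
  then show ?thesis
    by (simp add: loads_def)
qed

lemma loads_Suc_prio:
  assumes "greedy M \<tau>" "finite M" "z \<in> N"
  shows "loads M \<tau> (Suc (prio z))
    = loads M \<tau> (prio z) - {#Min_mset (loads M \<tau> (prio z))#} + {#q * Min_mset (loads M \<tau> (prio z)) + b z#}"
proof -
  have "\<tau> z \<in> M" and least: "\<forall>j\<in>M. load (jobs_below \<tau> (\<tau> z) (prio z)) \<le> load (jobs_below \<tau> j (prio z))"
    using assms(1,3) by (auto simp: greedy_def)
  then have min: "Min_mset (loads M \<tau> (prio z)) = load (jobs_below \<tau> (\<tau> z) (prio z))"
    using assms(2) by (intro Min_eqI) (auto simp: loads_def)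
  have "jobs_below \<tau> (\<tau> z) (Suc (prio z)) = insert z (jobs_below \<tau> (\<tau> z) (prio z))"
    using assms(3) prio_eq_iff by (auto simp: jobs_below_def less_Suc_eq)
  then have step: "load (jobs_below \<tau> (\<tau> z) (Suc (prio z))) = q * load (jobs_below \<tau> (\<tau> z) (prio z)) + b z"
    using finite_N by (simp add: load_insert_last jobs_below_def)
  have "jobs_below \<tau> j (Suc (prio z)) = jobs_below \<tau> j (prio z)" if "j \<noteq> \<tau> z" for j
    using that assms(3) prio_eq_iff by (auto simp: jobs_below_def less_Suc_eq)
  then have "loads M \<tau> (Suc (prio z))
      = loads M \<tau> (prio z) - {#load (jobs_below \<tau> (\<tau> z) (prio z))#} + {#load (jobs_below \<tau> (\<tau> z) (Suc (prio z)))#}"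
    unfolding loads_def by (intro image_mset_change_one[OF assms(2) \<open>\<tau> z \<in> M\<close>]) simp
  then show ?thesis
    unfolding min step .
qed

lemma greedy_loads_eq:
  assumes "greedy M \<tau>" "greedy M \<tau>'" "finite M"
  shows "loads M \<tau> p = loads M \<tau>' p"
proof (induction p)
  case 0
  show ?case by (simp add: loads_def jobs_below_def)
next
  case (Suc p)
  show ?case
  proof (cases "p \<in> prio ` N")
    case True
    then obtain z where "z \<in> N" "p = prio z" by blast
    then show ?thesis
      using Suc loads_Suc_prio[OF assms(1,3)] loads_Suc_prio[OF assms(2,3)] by simp
  next
    case False
    then show ?thesis
      using Suc by (simp add: loads_Suc_not_prio)
  qed
qed

lemma greedy_total_processing_time_eq:
  assumes "greedy M \<tau>" "greedy M \<tau>'" "finite M" "\<forall>j\<in>M. s j = 1"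
  shows "total_processing_time N prio proc s \<tau> = total_processing_time N prio proc s \<tau>'"
proof -
  have "total_processing_time N prio proc s \<upsilon> = sum_mset (loads M \<upsilon> (Suc n))" if "greedy M \<upsilon>" for \<upsilon>
  proof -
    have "\<forall>i\<in>N. \<upsilon> i \<in> M"
      using that by (simp add: greedy_def)
    then show ?thesis
      using assms(3,4) by (simp add: total_processing_time_eq_sum_load loads_def jobs_below_Suc_n sum_unfold_sum_mset)
  qed
  then show ?thesis
    using assms greedy_loads_eq by metis
qed

lemma total_processing_time_eq_sum_num_after:
  assumes "\<forall>i\<in>N. \<tau> i \<in> M" "finite M" "\<forall>j\<in>M. s j = 1"
  shows "total_processing_time N prio proc s \<tau> = (\<Sum>k\<in>N. b k * q ^ num_after \<tau> k)"
proof -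
  have "load {k\<in>N. \<tau> k = j} = (\<Sum>k\<in>{k\<in>N. \<tau> k = j}. b k * q ^ num_after \<tau> k)" for j
    unfolding load_def num_after_def by (intro sum.cong) auto
  then have "total_processing_time N prio proc s \<tau>
      = (\<Sum>j\<in>M. \<Sum>k\<in>{k\<in>N. \<tau> k = j}. b k * q ^ num_after \<tau> k)"
    using total_processing_time_eq_sum_load[OF assms] by simp
  also have "\<dots> = (\<Sum>k\<in>N. b k * q ^ num_after \<tau> k)"
    by (rule sum.group[OF finite_N assms(2)]) (use assms(1) in auto)
  finally show ?thesis .
qed

lemma power_q_eq: "q ^ r = 1 + a * (\<Sum>u<r. q ^ u)"
  using power_diff_1_eq[of q r] by (simp add: q_def)

definition tail_weight :: "('j \<Rightarrow> 'm) \<Rightarrow> nat \<Rightarrow> real" where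
  "tail_weight \<tau> u = (\<Sum>k\<in>{k\<in>N. u < num_after \<tau> k}. b k)"

lemma sum_num_after_eq_tail_weights:
  "(\<Sum>k\<in>N. b k * q ^ num_after \<tau> k) = (\<Sum>k\<in>N. b k) + a * (\<Sum>u<n. q ^ u * tail_weight \<tau> u)"
proof -
  have "b k * q ^ num_after \<tau> k = b k + a * (\<Sum>u<n. if u < num_after \<tau> k then q ^ u * b k else 0)"
    if "k \<in> N" for k
  proof -
    have "{u\<in>{..<n}. u < num_after \<tau> k} = {..<num_after \<tau> k}"
      using num_after_less_n[OF that, of \<tau>] by auto
    then have "(\<Sum>u<n. if u < num_after \<tau> k then q ^ u * b k else 0) = (\<Sum>u<num_after \<tau> k. q ^ u) * b k"
      by (simp add: sum.inter_filter[symmetric] sum_distrib_right)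
    then show ?thesis
      by (subst power_q_eq) (simp add: algebra_simps)
  qed
  then have "(\<Sum>k\<in>N. b k * q ^ num_after \<tau> k)
      = (\<Sum>k\<in>N. b k) + a * (\<Sum>u<n. \<Sum>k\<in>N. if u < num_after \<tau> k then q ^ u * b k else 0)"
    by (simp add: sum.distrib sum_distrib_left sum.swap[of _ "{..<n}"])
  also have "(\<lambda>u. \<Sum>k\<in>N. if u < num_after \<tau> k then q ^ u * b k else 0) = (\<lambda>u. q ^ u * tail_weight \<tau> u)"
    using finite_N by (simp add: tail_weight_def sum.inter_filter[symmetric] sum_distrib_left)
  finally show ?thesis .
qed

end

locale round_robin = linear_jobs N prio b a for N :: "'j set" and prio b a +
  fixes M :: "'m set" and e :: "nat \<Rightarrow> 'm"
  assumes bij_e: "bij_betw e {0..<card M} M" and M_nonempty: "M \<noteq> {}"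
    and b_mono: "\<forall>u\<in>N. \<forall>v\<in>N. prio u < prio v \<longrightarrow> b u \<le> b v"
begin

abbreviation m :: nat where "m \<equiv> card M"

lemma finite_M: "finite M"
  using bij_e bij_betw_finite by blast

lemma m_pos: "0 < m"
  using finite_M M_nonempty by (simp add: card_gt_0_iff)

lemma b_mono_le: "k \<in> N \<Longrightarrow> l \<in> N \<Longrightarrow> prio k \<le> prio l \<Longrightarrow> b k \<le> b l"
  using b_mono prio_eq_iff by (metis le_neq_implies_less order_refl)

definition rho :: "'j \<Rightarrow> 'm" where
  "rho k = e (prio k mod m)"

lemma rho_in_M: "rho k \<in> M"
  using bij_e m_pos by (auto simp: rho_def bij_betw_def)

lemma rho_eq_iff: "rho k = rho l \<longleftrightarrow> prio k mod m = prio l mod m"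
  using bij_e m_pos by (auto simp: rho_def bij_betw_def inj_on_def)

lemma rank_rho:
  assumes "k \<in> N" "p \<le> Suc n"
  shows "rank (jobs_below rho (rho k) p) k = (p - 1 - prio k) div m"
proof -
  have "{l\<in>jobs_below rho (rho k) p. prio k < prio l}
      = {l\<in>N. prio k < prio l \<and> prio l < p \<and> prio l mod m = prio k mod m}"
    by (auto simp: jobs_below_def rho_eq_iff)
  then have "rank (jobs_below rho (rho k) p) k
      = card {x\<in>{1..n}. prio k < x \<and> x < p \<and> x mod m = prio k mod m}"
    unfolding rank_def by (simp only: card_filter_prio[of "\<lambda>x. prio k < x \<and> x < p \<and> x mod m = prio k mod m"])
  also have "{x\<in>{1..n}. prio k < x \<and> x < p \<and> x mod m = prio k mod m}
      = {x. prio k < x \<and> x < p \<and> x mod m = prio k mod m}"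
    using assms prio_bounds[of k] by auto
  finally show ?thesis
    by (simp add: card_same_residue_between)
qed

lemma num_after_rho: "k \<in> N \<Longrightarrow> num_after rho k = (n - prio k) div m"
  using rank_rho[of k "Suc n"] by (simp add: num_after_def jobs_below_Suc_n)

text \<open>Shifting priorities by d < m carries the queue ahead of z on its own machine into the queue
of machine e r, rank by rank and, b being monotone, with no smaller basic times.\<close>
lemma rho_shift:
  assumes "z \<in> N" "k \<in> jobs_below rho (rho z) (prio z)" "r < m"
  defines "d \<equiv> (r + m - prio z mod m) mod m"
  shows "inv_into N prio (prio k + d) \<in> jobs_below rho (e r) (prio z)"
    and "prio (inv_into N prio (prio k + d)) = prio k + d"
    and "b k \<le> b (inv_into N prio (prio k + d))"
    and "rank (jobs_below rho (e r) (prio z)) (inv_into N prio (prio k + d))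
       = rank (jobs_below rho (rho z) (prio z)) k"
proof -
  let ?l = "inv_into N prio (prio k + d)"
  have k: "k \<in> N" "prio k < prio z" "prio k mod m = prio z mod m" "rho k = rho z"
    using assms(2) by (auto simp: jobs_below_def rho_eq_iff)
  then obtain i where i: "prio z - prio k = m * i"
    using mod_eq_dvd_iff_nat[of "prio k" "prio z" m] k(2,3) by (auto elim: dvdE)
  then have "0 < i"
    using k(2) by (cases i) auto
  then have "m \<le> prio z - prio k"
    unfolding i by simp
  moreover have "d < m"
    using m_pos by (simp add: d_def)
  ultimately have "prio k + d \<in> {1..n}"
    using prio_bounds[OF k(1)] prio_bounds[OF assms(1)] by auto
  then have l: "?l \<in> N" "prio ?l = prio k + d"
    using inv_prio by auto
  moreover have "(prio k + d) mod m = r"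
    unfolding d_def by (rule mod_add_offset_eq[OF k(3) assms(3)])
  then have "rho ?l = e r"
    unfolding rho_def l(2) by simp
  ultimately show "?l \<in> jobs_below rho (e r) (prio z)"
    using \<open>prio k + d \<in> {1..n}\<close> k(2) \<open>d < m\<close> \<open>m \<le> prio z - prio k\<close>
    by (auto simp: jobs_below_def)
  show "prio ?l = prio k + d"
    by (rule l(2))
  show "b k \<le> b ?l"
    using l k(1) by (intro b_mono_le) auto
  have "prio z \<le> Suc n"
    using prio_bounds[OF assms(1)] by simp
  moreover have "prio z - 1 - prio ?l = m * i - Suc d" "prio z - 1 - prio k = m * i - Suc 0"
    unfolding l(2) i[symmetric] by simp_all
  ultimately have "rank (jobs_below rho (e r) (prio z)) ?l = (m * i - Suc d) div m"
    using rank_rho[OF l(1), of "prio z"] \<open>rho ?l = e r\<close> by simp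
  also have "\<dots> = (m * i - Suc 0) div m"
    using mult_minus_Suc_div_eq[OF \<open>d < m\<close> \<open>0 < i\<close>] mult_minus_Suc_div_eq[OF m_pos \<open>0 < i\<close>] by simp
  also have "\<dots> = rank (jobs_below rho (rho z) (prio z)) k"
    using rank_rho[OF k(1) \<open>prio z \<le> Suc n\<close>] k(4) \<open>prio z - 1 - prio k = m * i - Suc 0\<close> by simp
  finally show "rank (jobs_below rho (e r) (prio z)) ?l = rank (jobs_below rho (rho z) (prio z)) k" .
qed

lemma rho_greedy: "greedy M rho"
  unfolding greedy_def
proof (intro ballI conjI)
  fix z assume "z \<in> N"
  show "rho z \<in> M"
    by (rule rho_in_M)
  fix j assume "j \<in> M"
  then have "j \<in> e ` {0..<m}"
    using bij_e by (simp add: bij_betw_def)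
  then obtain r where "r < m" "j = e r"
    by auto
  define d where "d = (r + m - prio z mod m) mod m"
  note shift = rho_shift[OF \<open>z \<in> N\<close> _ \<open>r < m\<close>, folded d_def]
  have "inj_on (\<lambda>k. inv_into N prio (prio k + d)) (jobs_below rho (rho z) (prio z))"
  proof (rule inj_onI)
    fix k l
    assume kl: "k \<in> jobs_below rho (rho z) (prio z)" "l \<in> jobs_below rho (rho z) (prio z)"
      and "inv_into N prio (prio k + d) = inv_into N prio (prio l + d)"
    then have "prio k = prio l"
      using shift(2)[OF kl(1)] shift(2)[OF kl(2)] by (metis add_right_cancel)
    then show "k = l"
      using kl inj_onD[OF inj_prio, of k l] by (simp add: jobs_below_def)
  qed
  then show "load (jobs_below rho (rho z) (prio z)) \<le> load (jobs_below rho j (prio z))"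
    unfolding \<open>j = e r\<close>
    by (rule load_le_load_embedding[OF jobs_below_subset jobs_below_subset]) (simp add: shift(1,3,4))
qed

lemma num_after_rho_gt_iff: "k \<in> N \<Longrightarrow> u < num_after rho k \<longleftrightarrow> prio k + m * Suc u \<le> n"
  using num_after_rho[of k] prio_bounds[of k] m_pos
  by (auto simp: less_eq_div_iff_mult_less_eq Suc_le_eq[symmetric] mult.commute)

lemma card_num_after_rho_gt: "card {k\<in>N. u < num_after rho k} = n - m * Suc u"
proof -
  have "{k\<in>N. u < num_after rho k} = {k\<in>N. prio k + m * Suc u \<le> n}"
    using num_after_rho_gt_iff by blast
  then have "card {k\<in>N. u < num_after rho k} = card {x\<in>{1..n}. x + m * Suc u \<le> n}"
    by (simp only: card_filter_prio[of "\<lambda>x. x + m * Suc u \<le> n"])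
  also have "{x\<in>{1..n}. x + m * Suc u \<le> n} = {1..n - m * Suc u}"
    by auto
  finally show ?thesis
    by simp
qed

lemma tail_weight_rho_le:
  assumes "\<forall>i\<in>N. \<tau> i \<in> M"
  shows "tail_weight rho u \<le> tail_weight \<tau> u"
  unfolding tail_weight_def
proof (rule sum_le_sum_dominated)
  let ?F = "{k\<in>N. u < num_after rho k}" and ?R = "{k\<in>N. u < num_after \<tau> k}"
  show "finite ?F" "finite ?R"
    using finite_N by simp_all
  have "card ?R = n - card {k\<in>N. num_after \<tau> k \<le> u}"
    using finite_N by (subst card_Diff_subset[symmetric]) (auto intro: arg_cong[where f = card])
  then show "card ?F \<le> card ?R"
    using card_num_after_le[OF assms finite_M, of u] card_num_after_rho_gt[of u] by simp
  show "\<forall>x\<in>?R - ?F. \<forall>y\<in>?F - ?R. b y \<le> b x"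
  proof (intro ballI)
    fix x y assume "x \<in> ?R - ?F" "y \<in> ?F - ?R"
    then have "prio y \<le> prio x"
      using num_after_rho_gt_iff by auto
    then show "b y \<le> b x"
      using \<open>x \<in> ?R - ?F\<close> \<open>y \<in> ?F - ?R\<close> b_mono_le by auto
  qed
  show "\<forall>x\<in>?R - ?F. 0 \<le> b x"
    using b_nonneg by simp
qed

lemma total_processing_time_rho_le:
  assumes "\<forall>i\<in>N. \<tau> i \<in> M" "\<forall>j\<in>M. s j = 1"
  shows "total_processing_time N prio proc s rho \<le> total_processing_time N prio proc s \<tau>"
proof -
  have "(\<Sum>u<n. q ^ u * tail_weight rho u) \<le> (\<Sum>u<n. q ^ u * tail_weight \<tau> u)"
    using tail_weight_rho_le[OF assms(1)] q_gt_1 by (intro sum_mono mult_left_mono) auto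
  moreover have "\<forall>i\<in>N. rho i \<in> M"
    using rho_in_M by simp
  ultimately show ?thesis
    using a_pos total_processing_time_eq_sum_num_after[OF _ finite_M assms(2)] assms(1)
    by (simp add: sum_num_after_eq_tail_weights)
qed

end

theorem lemma19:
  fixes N :: "'j set" and M :: "'m set" and prio :: "'j \<Rightarrow> nat"
    and b :: "'j \<Rightarrow> real" and a :: real and s :: "'m \<Rightarrow> real" and sigma :: "'j \<Rightarrow> 'm"
  assumes "finite N" and "finite M" and "M \<noteq> {}"
    and "\<forall>j\<in>M. s j = 1"
    and "\<forall>i\<in>N. b i \<ge> 0" and "a > 0"
    and "bij_betw prio N {1..card N}"
    and "\<forall>u\<in>N. \<forall>v\<in>N. prio u < prio v \<longrightarrow> b u \<le> b v"
    and "pure_NE N M prio (\<lambda>i t. b i + a * t) s sigma"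
  shows "\<forall>sigma'. profile N M sigma' \<longrightarrow>
           total_processing_time N prio (\<lambda>i t. b i + a * t) s sigma
             \<le> total_processing_time N prio (\<lambda>i t. b i + a * t) s sigma'"
proof (intro allI impI)
  fix sigma' assume "profile N M sigma'"
  obtain e where "bij_betw e {0..<card M} M"
    using ex_bij_betw_nat_finite[OF assms(2)] by blast
  then interpret round_robin N prio b a M e
    using assms by unfold_locales auto
  have "greedy M sigma"
    using pure_NE_imp_greedy[OF assms(9,4)] .
  then have "total_processing_time N prio proc s sigma = total_processing_time N prio proc s rho"
    using greedy_total_processing_time_eq[OF _ rho_greedy assms(2,4)] by blast
  also have "\<dots> \<le> total_processing_time N prio proc s sigma'"
    using total_processing_time_rho_le \<open>profile N M sigma'\<close> assms(4) by (simp add: profile_def)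
  finally show "total_processing_time N prio proc s sigma \<le> total_processing_time N prio proc s sigma'" .
qed

end
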